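(* Consider the hybrid network model described in the context with $\bm u\equiv \bm 0$. Assume $|\phi(\cdot)|\le\phi_{max}$ and $$c_n>d^{in}\max\{\overline a^+,|\underline a^-|\}.$$ Then the neuronal state equation $$\dot{\bm x}=-C_n\bm x+\Gamma(A(t)\bm x),$$ with the piecewise constant weight matrix $A(t)$ generated by the weight update rule, is asymptotically stable: the origin is stable and every solution $\bm x(t)$ tends to $\bm 0$ as $t\to\infty$.
   Context: Let $\mathcal G=(\mathcal V,\mathcal E)$ be a directed graph with $N=|\mathcal V|$ nodes. Its edge set is split into disjoint sets $\mathcal E^+$ (excitatory) and $\mathcal E^-$ (inhibitory) with $\mathcal E=\mathcal E^+\cup\mathcal E^-$. The edge $(j,i)$ goes from node $j$ to node $i$. Let $d^{in}$ be the maximum in-degree of $\mathcal G$. Constants are $c_n>0$, $0<c_a^+,c_a^-<1$, $\theta>0$, $\tau>0$, and bounds $\underline a^-<\overline a^-<0<\underline a^+<\overline a^+$. The function $\phi:\mathbb R\to\mathbb R$ is bounded. For a scalar $y$, the clipping function is $[y]_{\underline y}^{\overline y}=\overline y$ if $y>\overline y$, $y$ if $\underline y\le y\le \overline y$, and $\underline y$ if $y<\underline y$. The threshold activation is $\gamma_\theta(s)=s$ if $|s|>\theta$ and $\gamma_\theta(s)=0$ otherwise; $\Gamma$ denotes $\gamma_\theta$ applied componentwise. The model (hybrid neuron/connectome dynamics): for $t\in(p\tau,(p+1)\tau]$, $p=0,1,2,\dots$, $$\dot x_i(t)=-c_nx_i(t)+\gamma_\theta\Big(\sum_{(j,i)\in\mathcal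 E}a_{ij}(t)x_j(t)\Big)+b_iu_i(t).$$ The weights are constant on each such interval and given by $$a_{ij}(t)=\big[c_a^-a_{ij}(p\tau)-\phi(x_i(p\tau)x_j(p\tau))\big]_{\underline a^-}^{\overline a^-}\quad\text{for }(j,i)\in\mathcal E^-,$$ $$a_{ij}(t)=\big[c_a^+a_{ij}(p\tau)+\phi(x_i(p\tau)x_j(p\tau))\big]_{\underline a^+}^{\overline a^+}\quad\text{for }(j,i)\in\mathcal E^+.$$ In addition, $a_{ij}\equiv0$ for non-edges, and $a_{ii}=0$. In vector form: $\dot{\bm x}=-C_n\bm x+\Gamma(A(t)\bm x)+B\bm u$, with $A=[a_{ij}]$ and $C_n=c_nI$. *)

theory Defs
  imports "HOL-Analysis.Analysis"
begin

definition clip :: "real \<Rightarrow> real \<Rightarrow> real \<Rightarrow> real" where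
  "clip lo hi y = (if y > hi then hi else if y < lo then lo else y)"

definition gamma_th :: "real \<Rightarrow> real \<Rightarrow> real" where
  "gamma_th \<theta> s = (if \<bar>s\<bar> > \<theta> then s else 0)"

text \<open>Maximum in-degree of the graph with edge set E on the finite node type;
  an edge (j,i) goes from j to i.\<close>
definition max_indeg :: "('n::finite \<times> 'n) set \<Rightarrow> nat" where
  "max_indeg E = Max ((\<lambda>i. card {j. (j, i) \<in> E}) ` UNIV)"

text \<open>Weight matrices on successive intervals: weight_seq ... 0 = initial weights a(0);
  weight_seq ... (Suc p) = weights valid on the interval (p tau, (p+1) tau],
  computed from the weights a(p tau) (= weight_seq ... p) and the state x(p tau).
  Entry i j is a_ij.\<close>
primrec weight_seq ::
  "('n::finite \<times> 'n) set \<Rightarrow> ('n \<times> 'n) set \<Rightarrow> real \<Rightarrow> real \<Rightarrow> real \<Rightarrow> real \<Rightarrow> real \<Rightarrow> real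
   \<Rightarrow> (real \<Rightarrow> real) \<Rightarrow> real \<Rightarrow> ('n \<Rightarrow> 'n \<Rightarrow> real) \<Rightarrow> (real \<Rightarrow> real ^ 'n) \<Rightarrow> nat \<Rightarrow> 'n \<Rightarrow> 'n \<Rightarrow> real"
where
  "weight_seq Ep Em cap cam alp ahp alm ahm \<phi> \<tau> A0 x 0 = A0"
| "weight_seq Ep Em cap cam alp ahp alm ahm \<phi> \<tau> A0 x (Suc p) =
     (\<lambda>i j. if i = j then 0
        else if (j, i) \<in> Em then
          clip alm ahm (cam * weight_seq Ep Em cap cam alp ahp alm ahm \<phi> \<tau> A0 x p i j
                        - \<phi> (x (real p * \<tau>) $ i * x (real p * \<tau>) $ j))
        else if (j, i) \<in> Ep then
          clip alp ahp (cap * weight_seq Ep Em cap cam alp ahp alm ahm \<phi> \<tau> A0 x p i j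
                        + \<phi> (x (real p * \<tau>) $ i * x (real p * \<tau>) $ j))
        else 0)"

text \<open>Piecewise constant weight matrix A(t): for t in (p tau, (p+1) tau] it is
  weight_seq ... (Suc p), since then ceiling (t / tau) = p + 1.\<close>
definition weight_at ::
  "('n::finite \<times> 'n) set \<Rightarrow> ('n \<times> 'n) set \<Rightarrow> real \<Rightarrow> real \<Rightarrow> real \<Rightarrow> real \<Rightarrow> real \<Rightarrow> real
   \<Rightarrow> (real \<Rightarrow> real) \<Rightarrow> real \<Rightarrow> ('n \<Rightarrow> 'n \<Rightarrow> real) \<Rightarrow> (real \<Rightarrow> real ^ 'n) \<Rightarrow> real \<Rightarrow> 'n \<Rightarrow> 'n \<Rightarrow> real"
where
  "weight_at Ep Em cap cam alp ahp alm ahm \<phi> \<tau> A0 x t =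
     weight_seq Ep Em cap cam alp ahp alm ahm \<phi> \<tau> A0 x (Suc (nat (\<lceil>t / \<tau>\<rceil> - 1)))"

text \<open>x is a (Caratheodory) solution on [0,\<infinity>) of
  x_i' = -c_n x_i + gamma_theta (sum_j a_ij(t) x_j), with u = 0, in integral form.\<close>
definition is_solution ::
  "('n::finite \<times> 'n) set \<Rightarrow> ('n \<times> 'n) set \<Rightarrow> real \<Rightarrow> real \<Rightarrow> real \<Rightarrow> real \<Rightarrow> real \<Rightarrow> real \<Rightarrow> real
   \<Rightarrow> real \<Rightarrow> (real \<Rightarrow> real) \<Rightarrow> real \<Rightarrow> ('n \<Rightarrow> 'n \<Rightarrow> real) \<Rightarrow> (real \<Rightarrow> real ^ 'n) \<Rightarrow> bool"
where
  "is_solution Ep Em cn cap cam alp ahp alm ahm \<theta> \<phi> \<tau> A0 x \<longleftrightarrow>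
     (\<forall>t \<ge> 0. \<forall>i.
        ((\<lambda>s. - cn * x s $ i
               + gamma_th \<theta> (\<Sum>j\<in>UNIV. weight_at Ep Em cap cam alp ahp alm ahm \<phi> \<tau> A0 x s i j * x s $ j))
         has_integral (x t $ i - x 0 $ i)) {0..t})"

end

theory Submission
  imports Defs
begin

text \<open>Clipping keeps every weight between \<open>alm\<close> and \<open>ahp\<close>, whatever the plasticity rule
  and \<open>\<phi>\<close> do, and the threshold only shrinks its argument; so the input to neuron \<open>i\<close> is
  bounded by \<open>L * infnorm x\<close> with \<open>L = max_indeg (Ep \<union> Em) * max ahp \<bar>alm\<bar> < cn\<close>. Hence at
  a time where the sup-norm is positive, the coordinate attaining it was strictly larger shortly
  before, since there the leak \<open>- cn * x\<^sub>i\<close> dominates the input. An infimum argument on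
  \<open>exp ((cn - L) / 2 * t) * infnorm (x t)\<close> turns this into exponential decay of the sup-norm;
  it needs only the integral form of the equation, not derivatives.\<close>

lemma infnorm_attained_cart: "\<exists>i. \<bar>x $ i\<bar> = infnorm (x :: real ^ 'n)"
proof -
  have "infnorm x = Max (range (\<lambda>i. \<bar>x $ i\<bar>))"
    unfolding infnorm_cart by (simp add: cSup_eq_Max full_SetCompr_eq)
  also have "\<dots> \<in> range (\<lambda>i. \<bar>x $ i\<bar>)"
    by (rule Max_in) auto
  finally show ?thesis by auto
qed

lemma exp_left_step_ge_1:
  fixes u :: real
  assumes "0 \<le> u" "u \<le> 1/2"
  shows "1 \<le> exp (- u / 2) * (1 + 3 * u / 4)"
proof -
  have "u * u \<le> u * (1/2)"
    using assms by (intro mult_left_mono) auto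
  moreover have "(1 - u / 2) * (1 + 3 * u / 4) = 1 + u / 4 - 3 / 8 * (u * u)"
    by (simp add: field_simps)
  ultimately have "1 \<le> (1 - u / 2) * (1 + 3 * u / 4)"
    using assms by linarith
  also have "\<dots> \<le> exp (- u / 2) * (1 + 3 * u / 4)"
    using assms exp_ge_add_one_self[of "- u / 2"] by (intro mult_right_mono) auto
  finally show ?thesis .
qed

lemma le_initial_if_left_descent:
  fixes N :: "real \<Rightarrow> real"
  assumes cont: "continuous_on {0..t} N" and "0 \<le> t"
    and descent: "\<And>s. 0 < s \<Longrightarrow> s \<le> t \<Longrightarrow> N 0 < N s \<Longrightarrow> \<exists>h. 0 < h \<and> h < s \<and> N s \<le> N (s - h)"
  shows "N t \<le> N 0"
proof (rule ccontr)
  assume "\<not> N t \<le> N 0"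
  define S where "S = {0..t} \<inter> N -` {N t..}"
  have "closed S"
    unfolding S_def by (rule continuous_closed_preimage[OF cont]) auto
  moreover have "t \<in> S" "bdd_below S"
    using \<open>0 \<le> t\<close> by (auto simp: S_def intro: bdd_belowI[of _ 0])
  ultimately have first: "Inf S \<in> S"
    using closed_contains_Inf by blast
  then have "N 0 < N (Inf S)" "0 < Inf S" "Inf S \<le> t"
    using \<open>\<not> N t \<le> N 0\<close> by (auto simp: S_def less_eq_real_def)
  then obtain h where h: "0 < h" "h < Inf S" "N (Inf S) \<le> N (Inf S - h)"
    using descent by blast
  with first have "Inf S - h \<in> S"
    by (auto simp: S_def)
  then have "Inf S \<le> Inf S - h"
    using \<open>bdd_below S\<close> by (rule cInf_lower)
  with \<open>0 < h\<close> show False by simp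
qed

lemma continuous_on_integral_form:
  fixes x :: "real \<Rightarrow> real ^ 'n"
  assumes sol: "\<And>t i. 0 \<le> t \<Longrightarrow> (f i has_integral (x t $ i - x 0 $ i)) {0..t}" and "0 \<le> T"
  shows "continuous_on {0..T} x"
proof -
  have "continuous_on {0..T} (\<lambda>t. x t $ i)" for i
  proof -
    have "continuous_on {0..T} (\<lambda>t. x 0 $ i + integral {0..t} (f i))"
      using has_integral_integrable[OF sol[OF \<open>0 \<le> T\<close>]]
      by (intro continuous_intros indefinite_integral_continuous_1)
    then show ?thesis
    proof (rule continuous_on_eq)
      show "x 0 $ i + integral {0..t} (f i) = x t $ i" if "t \<in> {0..T}" for t
        using integral_unique[OF sol[of t i]] that by simp
    qed
  qed
  then have "continuous_on {0..T} (\<lambda>t. \<chi> i. x t $ i)"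
    by (rule continuous_on_vec_lambda)
  then show ?thesis
    by simp
qed

lemma integral_form_increment:
  fixes x :: "real \<Rightarrow> real ^ 'n"
  assumes sol: "\<And>t i. 0 \<le> t \<Longrightarrow> (f i has_integral (x t $ i - x 0 $ i)) {0..t}"
    and "0 \<le> s" "s \<le> t"
  shows "x t $ i - x s $ i = integral {s..t} (f i)"
proof -
  have int: "f i integrable_on {0..t}"
    using sol assms by (meson has_integral_integrable order_trans)
  have "integral {0..s} (f i) + integral {s..t} (f i) = integral {0..t} (f i)"
    by (rule Henstock_Kurzweil_Integration.integral_combine[OF assms(2,3) int])
  then show ?thesis
    using integral_unique[OF sol[of t i]] integral_unique[OF sol[of s i]] assms by auto
qed

lemma signed_drift_le_near_peak:
  fixes y z :: "real ^ 'n"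
  assumes drift: "\<bar>r + c * y $ i\<bar> \<le> L * infnorm y"
    and peak: "\<bar>\<sigma>\<bar> = 1" "\<sigma> * z $ i = infnorm z"
    and near: "norm (y - z) < \<eta>" and "0 \<le> c" "0 \<le> L"
  shows "\<sigma> * r \<le> - c * (infnorm z - \<eta>) + L * (infnorm z + \<eta>)"
proof -
  have "\<sigma> * z $ i - \<sigma> * y $ i \<le> \<bar>\<sigma> * (z $ i - y $ i)\<bar>"
    by (simp add: right_diff_distrib)
  also have "\<dots> = \<bar>(y - z) $ i\<bar>"
    using peak by (simp add: abs_mult abs_minus_commute)
  also have "\<dots> \<le> norm (y - z)"
    by (rule component_le_norm_cart)
  finally have "infnorm z - \<eta> \<le> \<sigma> * y $ i"
    using peak near by linarith
  then have "c * (infnorm z - \<eta>) \<le> c * (\<sigma> * y $ i)"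
    using \<open>0 \<le> c\<close> by (rule mult_left_mono)
  moreover have "infnorm y \<le> infnorm z + infnorm (y - z)"
    using infnorm_triangle[of z "y - z"] by simp
  then have "L * infnorm y \<le> L * (infnorm z + \<eta>)"
    using near infnorm_le_norm[of "y - z"] \<open>0 \<le> L\<close> by (intro mult_left_mono) auto
  moreover have "\<sigma> * (r + c * y $ i) \<le> \<bar>\<sigma> * (r + c * y $ i)\<bar>"
    by (rule abs_ge_self)
  then have "\<sigma> * (r + c * y $ i) \<le> L * infnorm y"
    using drift peak by (simp add: abs_mult)
  ultimately show ?thesis
    by (simp add: algebra_simps)
qed

lemma infnorm_left_growth:
  fixes x :: "real \<Rightarrow> real ^ 'n"
  assumes sol: "\<And>t i. 0 \<le> t \<Longrightarrow> (f i has_integral (x t $ i - x 0 $ i)) {0..t}"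
    and drift: "\<And>s i. 0 \<le> s \<Longrightarrow> \<bar>f i s + c * x s $ i\<bar> \<le> L * infnorm (x s)"
    and L: "0 \<le> L" and \<rho>: "0 \<le> \<rho>" "\<rho> < c - L"
    and t: "0 < t" "0 < infnorm (x t)"
  shows "\<exists>d>0. \<forall>h. 0 < h \<longrightarrow> h < d \<longrightarrow> h \<le> t \<longrightarrow> infnorm (x t) * (1 + \<rho> * h) \<le> infnorm (x (t - h))"
proof -
  define M where "M = infnorm (x t)"
  obtain i where i: "\<bar>x t $ i\<bar> = M"
    using infnorm_attained_cart M_def by metis
  define \<sigma> where "\<sigma> = sgn (x t $ i)"
  have \<sigma>: "\<bar>\<sigma>\<bar> = 1" "\<sigma> * x t $ i = M"
    using i t by (auto simp: \<sigma>_def sgn_if M_def)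
  \<comment> \<open>\<open>\<eta>\<close> is chosen so that the peak coordinate \<open>\<sigma> * x $ i\<close> decreases at rate at least \<open>\<rho> * M\<close> near \<open>t\<close>.\<close>
  define \<eta> where "\<eta> = (c - L - \<rho>) * M / (c + L)"
  have \<eta>: "0 < \<eta>" "(c + L) * \<eta> = (c - L - \<rho>) * M"
    using L \<rho> t by (auto simp: \<eta>_def M_def)
  obtain d where d: "0 < d" "\<And>s. s \<in> {0..t} \<Longrightarrow> dist s t < d \<Longrightarrow> dist (x s) (x t) < \<eta>"
    using continuous_on_integral_form[OF sol, of t] t \<eta>(1)
    unfolding continuous_on_iff by (metis atLeastAtMost_iff less_eq_real_def order_refl)
  have slope: "\<sigma> * f i s \<le> - \<rho> * M" if "t - d < s" "s \<le> t" "0 \<le> s" for s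
  proof -
    have "norm (x s - x t) < \<eta>"
      using d(2)[of s] that by (simp add: dist_norm dist_real_def)
    then have "\<sigma> * f i s \<le> - c * (M - \<eta>) + L * (M + \<eta>)"
      using signed_drift_le_near_peak[OF drift[OF \<open>0 \<le> s\<close>] \<sigma>(1) \<sigma>(2)[unfolded M_def]] L \<rho> by (simp add: M_def)
    also have "\<dots> = - \<rho> * M"
      using \<eta>(2) by (simp add: algebra_simps)
    finally show ?thesis .
  qed
  have "infnorm (x t) * (1 + \<rho> * h) \<le> infnorm (x (t - h))" if h: "0 < h" "h < d" "h \<le> t" for h
  proof -
    have int: "f i integrable_on {t - h..t}"
      using sol[of t i] t h by (meson has_integral_integrable integrable_subinterval_real
          less_eq_real_def atLeastatMost_subset_iff diff_ge_0_iff_ge order_refl)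
    have "\<sigma> * (x t $ i - x (t - h) $ i) = integral {t - h..t} (\<lambda>s. \<sigma> * f i s)"
      using integral_form_increment[OF sol, of "t - h" t i] h by simp
    also have "\<dots> \<le> integral {t - h..t} (\<lambda>s. - \<rho> * M)"
      using h slope integrable_on_cmult_left[OF int] by (intro integral_le) auto
    finally have "M * (1 + \<rho> * h) \<le> \<sigma> * x (t - h) $ i"
      using \<sigma>(2) h by (simp add: algebra_simps)
    also have "\<dots> \<le> infnorm (x (t - h))"
      using component_le_infnorm_cart[of "x (t - h)" i] \<sigma>(1)
      by (metis abs_ge_self abs_mult mult_1 order_trans)
    finally show ?thesis
      by (simp add: M_def)
  qed
  with d(1) show ?thesis
    by blast
qed

lemma exp_weighted_infnorm_left_descent:
  fixes x :: "real \<Rightarrow> real ^ 'n"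
  assumes sol: "\<And>t i. 0 \<le> t \<Longrightarrow> (f i has_integral (x t $ i - x 0 $ i)) {0..t}"
    and drift: "\<And>s i. 0 \<le> s \<Longrightarrow> \<bar>f i s + c * x s $ i\<bar> \<le> L * infnorm (x s)"
    and L: "0 \<le> L" "L < c" and s: "0 < s" "0 < infnorm (x s)"
  defines "k \<equiv> c - L"
  shows "\<exists>h. 0 < h \<and> h < s \<and>
    exp (k / 2 * s) * infnorm (x s) \<le> exp (k / 2 * (s - h)) * infnorm (x (s - h))"
proof -
  have k: "0 < k"
    using L by (simp add: k_def)
  obtain d where d: "0 < d"
    "\<And>h. 0 < h \<Longrightarrow> h < d \<Longrightarrow> h \<le> s \<Longrightarrow> infnorm (x s) * (1 + 3 * k / 4 * h) \<le> infnorm (x (s - h))"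
    using infnorm_left_growth[OF sol drift L(1), of "3 * k / 4" s] k s by (auto simp: k_def)
  define h where "h = min (d / 2) (min (s / 2) (1 / (2 * k)))"
  have h: "0 < h" "h < d" "h < s" "h \<le> 1 / (2 * k)"
    using d s k by (auto simp: h_def)
  then have "k * h \<le> 1 / 2"
    using k by (simp add: field_simps)
  then have "infnorm (x s) \<le> exp (- (k * h) / 2) * (infnorm (x s) * (1 + 3 * k / 4 * h))"
    using mult_right_mono[OF exp_left_step_ge_1[of "k * h"] infnorm_pos_le[of "x s"]] h k
    by (simp add: algebra_simps)
  then have "exp (k / 2 * s) * infnorm (x s)
      \<le> exp (k / 2 * s) * (exp (- (k * h) / 2) * (infnorm (x s) * (1 + 3 * k / 4 * h)))"
    by (rule mult_left_mono) simp
  also have "\<dots> \<le> exp (k / 2 * s) * (exp (- (k * h) / 2) * infnorm (x (s - h)))"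
    using d(2)[of h] h by (intro mult_left_mono) auto
  also have "\<dots> = exp (k / 2 * (s - h)) * infnorm (x (s - h))"
    by (simp add: algebra_simps flip: exp_add)
  finally show ?thesis
    using h by blast
qed

lemma infnorm_exp_decay_integral_form:
  fixes x :: "real \<Rightarrow> real ^ 'n"
  assumes sol: "\<And>t i. 0 \<le> t \<Longrightarrow> (f i has_integral (x t $ i - x 0 $ i)) {0..t}"
    and drift: "\<And>s i. 0 \<le> s \<Longrightarrow> \<bar>f i s + c * x s $ i\<bar> \<le> L * infnorm (x s)"
    and L: "0 \<le> L" "L < c" and "0 \<le> t"
  shows "infnorm (x t) \<le> exp (- ((c - L) / 2) * t) * infnorm (x 0)"
proof -
  define N where "N s = exp ((c - L) / 2 * s) * infnorm (x s)" for s
  have "N t \<le> N 0"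
  proof (rule le_initial_if_left_descent)
    show "continuous_on {0..t} N"
      unfolding N_def using continuous_on_integral_form[OF sol \<open>0 \<le> t\<close>]
      by (intro continuous_intros)
    show "\<exists>h. 0 < h \<and> h < s \<and> N s \<le> N (s - h)" if "0 < s" "N 0 < N s" for s
    proof -
      have "infnorm (x s) \<noteq> 0"
        using that infnorm_pos_le[of "x 0"] by (auto simp: N_def)
      then have "0 < infnorm (x s)"
        using infnorm_pos_le[of "x s"] by linarith
      then show ?thesis
        unfolding N_def using exp_weighted_infnorm_left_descent[OF sol drift L \<open>0 < s\<close>] by blast
    qed
  qed fact
  then have "exp (- ((c - L) / 2 * t)) * N t \<le> exp (- ((c - L) / 2 * t)) * infnorm (x 0)"
    by (simp add: N_def)
  then show ?thesis
    by (simp add: N_def mult.assoc[symmetric] flip: exp_add)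
qed

lemma norm_le_of_infnorm_decay:
  fixes x :: "real \<Rightarrow> 'a::euclidean_space"
  assumes "infnorm (x t) \<le> exp (- k * t) * infnorm (x 0)" "0 \<le> k" "0 \<le> t"
  shows "norm (x t) \<le> sqrt DIM('a) * norm (x 0)"
proof -
  have "infnorm (x t) \<le> infnorm (x 0)"
    using assms mult_right_mono[of "exp (- k * t)" 1 "infnorm (x 0)"] infnorm_pos_le[of "x 0"] by simp
  then have "infnorm (x t) \<le> norm (x 0)"
    using infnorm_le_norm[of "x 0"] by linarith
  then have "sqrt DIM('a) * infnorm (x t) \<le> sqrt DIM('a) * norm (x 0)"
    by (rule mult_left_mono) simp
  with norm_le_infnorm[of "x t"] show ?thesis
    by linarith
qed

lemma tendsto_zero_of_infnorm_decay:
  fixes x :: "real \<Rightarrow> 'a::euclidean_space"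
  assumes decay: "\<And>t. 0 \<le> t \<Longrightarrow> infnorm (x t) \<le> exp (- k * t) * infnorm (x 0)" and "0 < k"
  shows "(x \<longlongrightarrow> 0) at_top"
proof (rule Lim_null_comparison)
  show "\<forall>\<^sub>F t in at_top. norm (x t) \<le> sqrt DIM('a) * (exp (- k * t) * infnorm (x 0))"
    unfolding eventually_at_top_linorder
  proof (intro exI allI impI)
    fix t :: real assume "0 \<le> t"
    have "norm (x t) \<le> sqrt DIM('a) * infnorm (x t)"
      by (rule norm_le_infnorm)
    also have "\<dots> \<le> sqrt DIM('a) * (exp (- k * t) * infnorm (x 0))"
      using decay[OF \<open>0 \<le> t\<close>] by (rule mult_left_mono) simp
    finally show "norm (x t) \<le> sqrt DIM('a) * (exp (- k * t) * infnorm (x 0))" .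
  qed
  have "filterlim (\<lambda>t. - k * t) at_bot at_top"
    using \<open>0 < k\<close> by (intro filterlim_tendsto_neg_mult_at_bot[OF tendsto_const] filterlim_ident) auto
  then have "((\<lambda>t. exp (- k * t)) \<longlongrightarrow> 0) at_top"
    by (rule filterlim_compose[OF exp_at_bot])
  then show "((\<lambda>t. sqrt DIM('a) * (exp (- k * t) * infnorm (x 0))) \<longlongrightarrow> 0) at_top"
    by (intro tendsto_mult_right_zero tendsto_mult_left_zero)
qed

lemma clip_mem: "lo \<le> hi \<Longrightarrow> clip lo hi y \<in> {lo..hi}"
  by (auto simp: clip_def)

lemma abs_gamma_th_le: "\<bar>gamma_th \<theta> s\<bar> \<le> \<bar>s\<bar>"
  by (simp add: gamma_th_def)

lemma abs_weight_seq_Suc_le: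
  fixes Ep Em :: "('n::finite \<times> 'n) set"
  assumes "alm \<le> ahm" "ahm \<le> 0" "0 \<le> alp" "alp \<le> ahp"
  shows "\<bar>weight_seq Ep Em cap cam alp ahp alm ahm \<phi> \<tau> A0 x (Suc p) i j\<bar> \<le> max ahp \<bar>alm\<bar>"
proof -
  have "\<bar>clip alm ahm y\<bar> \<le> max ahp \<bar>alm\<bar>" "\<bar>clip alp ahp y\<bar> \<le> max ahp \<bar>alm\<bar>" for y
    using clip_mem[of alm ahm y] clip_mem[of alp ahp y] assms by (auto simp: abs_le_iff le_max_iff_disj)
  moreover have "0 \<le> max ahp \<bar>alm\<bar>"
    by simp
  ultimately show ?thesis
    by simp
qed

lemma abs_sum_supported_le:
  fixes w v :: "'a::finite \<Rightarrow> real"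
  assumes support: "\<And>j. j \<notin> J \<Longrightarrow> w j = 0"
    and w: "\<And>j. \<bar>w j\<bar> \<le> a" and v: "\<And>j. \<bar>v j\<bar> \<le> M"
  shows "\<bar>\<Sum>j\<in>UNIV. w j * v j\<bar> \<le> real (card J) * a * M"
proof -
  have "0 \<le> a"
    by (rule order_trans[OF abs_ge_zero w])
  have "(\<Sum>j\<in>UNIV. w j * v j) = (\<Sum>j\<in>J. w j * v j)"
    using support by (intro sum.mono_neutral_right) auto
  also have "\<bar>\<dots>\<bar> \<le> (\<Sum>j\<in>J. \<bar>w j * v j\<bar>)"
    by (rule sum_abs)
  also have "\<dots> \<le> (\<Sum>j\<in>J. a * M)"
    unfolding abs_mult by (rule sum_mono, rule mult_mono[OF w v \<open>0 \<le> a\<close> abs_ge_zero])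
  finally show ?thesis
    by simp
qed

lemma abs_network_input_le:
  fixes Ep Em :: "('n::finite \<times> 'n) set"
  assumes "alm \<le> ahm" "ahm \<le> 0" "0 \<le> alp" "alp \<le> ahp"
  shows "\<bar>\<Sum>j\<in>UNIV. weight_at Ep Em cap cam alp ahp alm ahm \<phi> \<tau> A0 x s i j * v $ j\<bar>
    \<le> real (max_indeg (Ep \<union> Em)) * max ahp \<bar>alm\<bar> * infnorm v"
proof -
  have "\<bar>\<Sum>j\<in>UNIV. weight_at Ep Em cap cam alp ahp alm ahm \<phi> \<tau> A0 x s i j * v $ j\<bar>
      \<le> real (card {j. (j, i) \<in> Ep \<union> Em}) * max ahp \<bar>alm\<bar> * infnorm v"
    unfolding weight_at_def
    by (rule abs_sum_supported_le) (simp, rule abs_weight_seq_Suc_le[OF assms], rule component_le_infnorm_cart)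
  also have "\<dots> \<le> real (max_indeg (Ep \<union> Em)) * max ahp \<bar>alm\<bar> * infnorm v"
  proof -
    have "card {j. (j, i) \<in> Ep \<union> Em} \<le> max_indeg (Ep \<union> Em)"
      unfolding max_indeg_def by (rule Max_ge) auto
    then show ?thesis
      by (intro mult_right_mono) (simp_all add: infnorm_pos_le)
  qed
  finally show ?thesis .
qed

lemma solution_infnorm_exp_decay:
  fixes Ep Em :: "('n::finite \<times> 'n) set"
  assumes bounds: "alm \<le> ahm" "ahm \<le> 0" "0 \<le> alp" "alp \<le> ahp"
    and gain: "real (max_indeg (Ep \<union> Em)) * max ahp \<bar>alm\<bar> < cn"
    and sol: "is_solution Ep Em cn cap cam alp ahp alm ahm \<theta> \<phi> \<tau> A0 x" and "0 \<le> t"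
  shows "infnorm (x t)
    \<le> exp (- ((cn - real (max_indeg (Ep \<union> Em)) * max ahp \<bar>alm\<bar>) / 2) * t) * infnorm (x 0)"
proof (rule infnorm_exp_decay_integral_form)
  let ?input = "\<lambda>s i. \<Sum>j\<in>UNIV. weight_at Ep Em cap cam alp ahp alm ahm \<phi> \<tau> A0 x s i j * x s $ j"
  show "((\<lambda>s. - cn * x s $ i + gamma_th \<theta> (?input s i)) has_integral (x t $ i - x 0 $ i)) {0..t}"
    if "0 \<le> t" for t i
    using sol that unfolding is_solution_def by blast
  show "\<bar>(- cn * x s $ i + gamma_th \<theta> (?input s i)) + cn * x s $ i\<bar>
      \<le> real (max_indeg (Ep \<union> Em)) * max ahp \<bar>alm\<bar> * infnorm (x s)" for s i
    using order_trans[OF abs_gamma_th_le abs_network_input_le[OF bounds]] by simp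
qed (use gain \<open>0 \<le> t\<close> in auto)

theorem theorem1:
  fixes Ep Em :: "('n::finite \<times> 'n) set"
    and cn cap cam \<theta> \<tau> alp ahp alm ahm \<phi>max :: real
    and \<phi> :: "real \<Rightarrow> real"
  assumes disj: "Ep \<inter> Em = {}"
    and cn: "cn > 0"
    and cap: "0 < cap" "cap < 1"
    and cam: "0 < cam" "cam < 1"
    and th: "\<theta> > 0"
    and tau: "\<tau> > 0"
    and bounds: "alm < ahm" "ahm < 0" "0 < alp" "alp < ahp"
    and phi_bd: "\<And>s. \<bar>\<phi> s\<bar> \<le> \<phi>max"
    and gain: "cn > real (max_indeg (Ep \<union> Em)) * max ahp \<bar>alm\<bar>"
  shows "(\<forall>\<epsilon>>0. \<exists>\<delta>>0. \<forall>A0 x.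
            is_solution Ep Em cn cap cam alp ahp alm ahm \<theta> \<phi> \<tau> A0 x \<and> norm (x 0) < \<delta>
            \<longrightarrow> (\<forall>t\<ge>0. norm (x t) < \<epsilon>))
       \<and> (\<forall>A0 x. is_solution Ep Em cn cap cam alp ahp alm ahm \<theta> \<phi> \<tau> A0 x
            \<longrightarrow> (x \<longlongrightarrow> 0) at_top)"
proof -
  define k where "k = (cn - real (max_indeg (Ep \<union> Em)) * max ahp \<bar>alm\<bar>) / 2"
  have k: "0 < k"
    using gain by (simp add: k_def)
  have decay: "infnorm (x t) \<le> exp (- k * t) * infnorm (x 0)"
    if "is_solution Ep Em cn cap cam alp ahp alm ahm \<theta> \<phi> \<tau> A0 x" "0 \<le> t" for A0 x t
    using solution_infnorm_exp_decay[OF _ _ _ _ gain that] bounds by (simp add: k_def)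
  show ?thesis
  proof (intro conjI allI impI)
    fix \<epsilon> :: real assume "0 < \<epsilon>"
    show "\<exists>\<delta>>0. \<forall>A0 x. is_solution Ep Em cn cap cam alp ahp alm ahm \<theta> \<phi> \<tau> A0 x \<and> norm (x 0) < \<delta>
            \<longrightarrow> (\<forall>t\<ge>0. norm (x t) < \<epsilon>)"
    proof (intro exI[of _ "\<epsilon> / sqrt CARD('n)"] conjI allI impI)
      fix A0 x and t :: real
      assume sol: "is_solution Ep Em cn cap cam alp ahp alm ahm \<theta> \<phi> \<tau> A0 x \<and> norm (x 0) < \<epsilon> / sqrt CARD('n)"
        and "0 \<le> t"
      have "norm (x t) \<le> sqrt CARD('n) * norm (x 0)"
        using norm_le_of_infnorm_decay[OF decay[of A0 x t]] sol k \<open>0 \<le> t\<close> by simp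
      also have "\<dots> < sqrt CARD('n) * (\<epsilon> / sqrt CARD('n))"
        using sol by (intro mult_strict_left_mono) auto
      finally show "norm (x t) < \<epsilon>"
        by simp
    qed (use \<open>0 < \<epsilon>\<close> in simp)
  next
    fix A0 x assume "is_solution Ep Em cn cap cam alp ahp alm ahm \<theta> \<phi> \<tau> A0 x"
    then show "(x \<longlongrightarrow> 0) at_top"
      by (intro tendsto_zero_of_infnorm_decay[OF decay k])
  qed
qed

end
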